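(* Let $f\in L^{1}$ and let $B=(b_{n,k})$ (as in the context) satisfy $$\left|b_{r,r-l}-b_{r+1,r+1-l}\right|\ll \frac{1}{(r+1)^{2}}\quad\text{for } 0\le l\le r.$$ Let $A$ be the Cesàro matrix $a_{n,k}=\frac1{n+1}$ for $0\le k\le n$, $a_{n,k}=0$ for $k>n$, and write $\widetilde T_{n,(\frac1{n+1}),B}$ for $\widetilde T_{n,A,B}$. Then for every natural $n$ and every real $x$, $$\left|\widetilde{T}_{n,(\frac{1}{n+1}),B}f(x)-\widetilde{f}\!\left(x,\tfrac{\pi}{n+1}\right)\right|\ll \frac{1}{n+1}\sum_{r=0}^{n}\left[\frac{1}{r+1}\sum_{k=0}^{r}\widetilde{w}_{x}f\!\left(\frac{\pi}{k+1}\right)\right],$$ and, at every point $x$ at which $\widetilde f(x)$ exists and $\frac{1}{\pi}\int_{0}^{\pi/(n+1)}\frac{|\psi_{x}(t)|}{t}\,dt\ll \widetilde{w}_{x}f\!\left(\frac{\pi}{n+1}\right)$ for all natural $n$, $$\left|\widetilde{T}_{n,(\frac{1}{n+1}),B}f(x)-\widetilde{f}(x)\right|\ll \frac{1}{n+1}\sum_{r=0}^{n}\left[\frac{1}{r+1}\sum_{k=0}^{r}\widetilde{w}_{x}f\!\left(\frac{\pi}{k+1}\right)\right].$$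
   Context: $L^{p}$ is the space of $2\pi$-periodic real functions that are $p$-th power Lebesgue integrable (essentially bounded if $p=\infty$) on $[-\pi,\pi]$. For $f\in L^1$ with Fourier coefficients $a_\nu(f),b_\nu(f)$, $\widetilde S_k f(x)=\sum_{\nu=1}^{k}(a_\nu(f)\sin\nu x-b_\nu(f)\cos\nu x)$. Put $\psi_x(t)=f(x+t)-f(x-t)$, $\widetilde f(x,\epsilon)=-\frac{1}{\pi}\int_{\epsilon}^{\pi}\psi_x(t)\frac12\cot\frac t2\,dt$, $\widetilde f(x)=\lim_{\epsilon\to0^+}\widetilde f(x,\epsilon)$. $B=(b_{n,k})$ is an infinite lower triangular real matrix with $b_{n,k}\ge0$ for $0\le k\le n$, $b_{n,k}=0$ for $k>n$, $\sum_{k=0}^nb_{n,k}=1$. For a matrix $A=(a_{n,k})$ of the same type, $\widetilde T_{n,A,B}f(x)=\sum_{r=0}^{n}\sum_{k=0}^{r}a_{n,r}b_{r,k}\widetilde S_kf(x)$. $\widetilde w_xf(\delta)=\frac1\delta\int_0^\delta|\psi_x(u)|\,du$. $I_1\ll I_2$ means $I_1\le KI_2$ for a positive constant $K$ independent of $n$. *)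

theory Defs
  imports "HOL-Analysis.Analysis"
begin

definition L1_periodic :: "(real \<Rightarrow> real) \<Rightarrow> bool" where
  "L1_periodic f \<longleftrightarrow> (\<forall>x. f (x + 2 * pi) = f x) \<and> f absolutely_integrable_on {-pi..pi}"

definition fourier_a :: "(real \<Rightarrow> real) \<Rightarrow> nat \<Rightarrow> real" where
  "fourier_a f \<nu> = (1 / pi) * integral {-pi..pi} (\<lambda>t. f t * cos (real \<nu> * t))"

definition fourier_b :: "(real \<Rightarrow> real) \<Rightarrow> nat \<Rightarrow> real" where
  "fourier_b f \<nu> = (1 / pi) * integral {-pi..pi} (\<lambda>t. f t * sin (real \<nu> * t))"

definition conj_partial_sum :: "(real \<Rightarrow> real) \<Rightarrow> nat \<Rightarrow> real \<Rightarrow> real" where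
  "conj_partial_sum f k x =
     (\<Sum>\<nu>=1..k. fourier_a f \<nu> * sin (real \<nu> * x) - fourier_b f \<nu> * cos (real \<nu> * x))"

definition psi :: "(real \<Rightarrow> real) \<Rightarrow> real \<Rightarrow> real \<Rightarrow> real" where
  "psi f x t = f (x + t) - f (x - t)"

definition conj_trunc :: "(real \<Rightarrow> real) \<Rightarrow> real \<Rightarrow> real \<Rightarrow> real" where
  "conj_trunc f x \<epsilon> = - (1 / pi) * integral {\<epsilon>..pi} (\<lambda>t. psi f x t * (cot (t / 2) / 2))"

definition conj_exists :: "(real \<Rightarrow> real) \<Rightarrow> real \<Rightarrow> bool" where
  "conj_exists f x \<longleftrightarrow> (\<exists>L. ((\<lambda>\<epsilon>. conj_trunc f x \<epsilon>) \<longlongrightarrow> L) (at_right 0))"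

definition conj_fun :: "(real \<Rightarrow> real) \<Rightarrow> real \<Rightarrow> real" where
  "conj_fun f x = Lim (at_right 0) (\<lambda>\<epsilon>. conj_trunc f x \<epsilon>)"

definition lt_stoch :: "(nat \<Rightarrow> nat \<Rightarrow> real) \<Rightarrow> bool" where
  "lt_stoch b \<longleftrightarrow> (\<forall>n k. k \<le> n \<longrightarrow> b n k \<ge> 0) \<and> (\<forall>n k. k > n \<longrightarrow> b n k = 0)
      \<and> (\<forall>n. (\<Sum>k=0..n. b n k) = 1)"

definition T_conj :: "(nat \<Rightarrow> nat \<Rightarrow> real) \<Rightarrow> (nat \<Rightarrow> nat \<Rightarrow> real) \<Rightarrow> (real \<Rightarrow> real) \<Rightarrow> nat \<Rightarrow> real \<Rightarrow> real" where
  "T_conj a b f n x = (\<Sum>r=0..n. \<Sum>k=0..r. a n r * b r k * conj_partial_sum f k x)"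

definition cesaro :: "nat \<Rightarrow> nat \<Rightarrow> real" where
  "cesaro n k = (if k \<le> n then 1 / (real n + 1) else 0)"

definition w_conj :: "(real \<Rightarrow> real) \<Rightarrow> real \<Rightarrow> real \<Rightarrow> real" where
  "w_conj f x \<delta> = (1 / \<delta>) * integral {0..\<delta>} (\<lambda>u. \<bar>psi f x u\<bar>)"

definition rhs_sum :: "(real \<Rightarrow> real) \<Rightarrow> real \<Rightarrow> nat \<Rightarrow> real" where
  "rhs_sum f x n = (1 / (real n + 1)) *
     (\<Sum>r=0..n. (1 / (real r + 1)) * (\<Sum>k=0..r. w_conj f x (pi / (real k + 1))))"

end

theory Submission
  imports Defs
begin

(*
  Writing S~_k f(x) = -(1/pi) \<integral>_0^pi psi_x(t) D~_k(t) dt with the conjugate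
  Dirichlet kernel D~_k(t) = \<Sum>_{nu=1..k} sin (nu t), the Cesaro--B mean becomes
  T~_n f(x) = -(1/pi) \<integral>_0^pi psi_x(t) K_n(t) dt for the kernel K_n = (1/(n+1)) \<Sum>_r \<Sum>_k b_{r,k} D~_k.
  Since |K_n| \<le> n, the piece over [0, pi/(n+1)] is bounded by pi w~_x f(pi/(n+1)).  On
  [pi/(n+1), pi] we compare K_n with the conjugate kernel cot(t/2)/2 defining f~(x, pi/(n+1)):
  by the closed form of D~_k their difference is a double sum of b_{r,k} cos((k+1/2)t)
  divided by 2(n+1) sin(t/2); Abel summation in r together with the hypothesis
  |b_{r,r-l} - b_{r+1,r+1-l}| \<le> C/(r+1)^2 bounds it on [pi/(j+1), pi/j] by
  (j+1)^2 (3 + 4C H_{n,j}) / (2(n+1)), where H_{n,j} = \<Sum>_{r=j..n} 1/(r+1).  Summing these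
  pieces by parts against G(d) = \<integral>_0^d |psi_x| and using that w~_x f(pi/(k+1)) is
  "quasi-decreasing" in k, every term is dominated by the right-hand side of the theorem.
  The second claim follows from the first, since |f~(x) - f~(x, pi/(n+1))| is at most
  (1/pi) \<integral>_0^{pi/(n+1)} |psi_x(t)|/t dt.
*)

section \<open>Elementary trigonometric estimates\<close>

lemma x_cos_le_sin:
  assumes "0 \<le> s" "s \<le> pi"
  shows "s * cos s \<le> sin s"
proof -
  have "(\<lambda>s. sin s - s * cos s) 0 \<le> (\<lambda>s. sin s - s * cos s) s"
  proof (rule DERIV_nonneg_imp_increasing_open[OF assms(1)])
    fix x assume x: "0 < x" "x < s"
    have "((\<lambda>s. sin s - s * cos s) has_real_derivative x * sin x) (at x)"
      by (auto intro!: derivative_eq_intros)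
    moreover have "0 \<le> x * sin x" using x assms sin_ge_zero[of x] by auto
    ultimately show "\<exists>y. ((\<lambda>s. sin s - s * cos s) has_real_derivative y) (at x) \<and> 0 \<le> y"
      by blast
  qed (intro continuous_intros)
  then show ?thesis by simp
qed

lemma half_cot_bounds:
  assumes "0 < t" "t \<le> pi"
  shows "0 \<le> cot (t/2) / 2" "cot (t/2) / 2 \<le> 1 / t"
proof -
  have s: "sin (t/2) > 0" using assms by (intro sin_gt_zero) auto
  have "cos (t/2) \<ge> 0" using assms by (intro cos_ge_zero) auto
  then show "0 \<le> cot (t/2) / 2" using s by (simp add: cot_def)
  have "(t/2) * cos (t/2) \<le> sin (t/2)" using assms by (intro x_cos_le_sin) auto
  then show "cot (t/2) / 2 \<le> 1 / t" using s assms by (simp add: cot_def field_simps)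
qed

lemma sin_div_antimono:
  assumes "0 < a" "a \<le> b" "b \<le> pi"
  shows "sin b / b \<le> sin a / a"
proof -
  have "(\<lambda>s. sin s / s) b \<le> (\<lambda>s. sin s / s) a"
  proof (rule DERIV_nonpos_imp_decreasing_open[OF assms(2)])
    fix x assume x: "a < x" "x < b"
    have "((\<lambda>s. sin s / s) has_real_derivative (cos x * x - 1 * sin x) / (x ^ Suc (Suc 0))) (at x)"
      using x assms by (intro DERIV_quotient DERIV_sin DERIV_ident) auto
    moreover have "x * cos x \<le> sin x" using x assms by (intro x_cos_le_sin) auto
    then have "(cos x * x - 1 * sin x) / (x ^ Suc (Suc 0)) \<le> 0"
      by (intro divide_nonpos_nonneg) (auto simp: mult.commute)
    ultimately show "\<exists>y. ((\<lambda>s. sin s / s) has_real_derivative y) (at x) \<and> y \<le> 0" by blast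
  qed (use assms in \<open>intro continuous_intros; auto\<close>)
  then show ?thesis by simp
qed

lemma jordan_half:
  assumes "0 \<le> t" "t \<le> pi"
  shows "t / pi \<le> sin (t/2)"
proof (cases "t = 0")
  case False
  then have "sin (pi/2) / (pi/2) \<le> sin (t/2) / (t/2)" using assms by (intro sin_div_antimono) auto
  then show ?thesis using False assms by (simp add: field_simps)
qed simp

section \<open>The conjugate Dirichlet kernel and related trigonometric sums\<close>

definition conj_dirichlet :: "nat \<Rightarrow> real \<Rightarrow> real" where
  "conj_dirichlet k t = (\<Sum>\<nu>=1..k. sin (real \<nu> * t))"

lemma conj_dirichlet_closed:
  "2 * sin (t/2) * conj_dirichlet k t = cos (t/2) - cos ((real k + 1/2) * t)"
proof (induction k)
  case (Suc k)
  have "cos ((real k + 1/2) * t) = cos ((real k + 1) * t - t/2)"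
    and "cos ((real k + 3/2) * t) = cos ((real k + 1) * t + t/2)"
    by (simp_all add: algebra_simps)
  then have "2 * sin (t/2) * sin ((real k + 1) * t) = cos ((real k + 1/2) * t) - cos ((real k + 3/2) * t)"
    by (simp add: cos_diff cos_add)
  then show ?case using Suc by (simp add: conj_dirichlet_def algebra_simps)
qed (simp add: conj_dirichlet_def)

lemma conj_dirichlet_abs_le: "\<bar>conj_dirichlet k t\<bar> \<le> real k"
proof -
  have "\<bar>conj_dirichlet k t\<bar> \<le> (\<Sum>\<nu>=1..k. \<bar>sin (real \<nu> * t)\<bar>)"
    unfolding conj_dirichlet_def by (rule sum_abs)
  also have "\<dots> \<le> (\<Sum>\<nu>=1..k. 1)" by (intro sum_mono) simp
  finally show ?thesis by simp
qed

lemma telescope_cos_half: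
  assumes "m \<le> r"
  shows "2 * sin (t/2) * (\<Sum>s=m..<r. cos ((real s + 1/2) * t)) = sin (real r * t) - sin (real m * t)"
  using assms
proof (induction r)
  case (Suc r)
  have "sin ((real r + 1) * t) = sin ((real r + 1/2) * t + t/2)"
    and "sin (real r * t) = sin ((real r + 1/2) * t - t/2)"
    by (simp_all add: algebra_simps)
  then have e: "2 * sin (t/2) * cos ((real r + 1/2) * t) = sin ((real r + 1) * t) - sin (real r * t)"
    by (simp add: sin_diff sin_add)
  show ?case
  proof (cases "m = Suc r")
    case False
    then show ?thesis using Suc e by (simp add: algebra_simps)
  qed simp
qed simp

lemma telescope_sin_half:
  assumes "m \<le> r"
  shows "2 * sin (t/2) * (\<Sum>s=m..<r. sin ((real s + 1/2) * t)) = cos (real m * t) - cos (real r * t)"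
  using assms
proof (induction r)
  case (Suc r)
  have "cos ((real r + 1) * t) = cos ((real r + 1/2) * t + t/2)"
    and "cos (real r * t) = cos ((real r + 1/2) * t - t/2)"
    by (simp_all add: algebra_simps)
  then have e: "2 * sin (t/2) * sin ((real r + 1/2) * t) = cos (real r * t) - cos ((real r + 1) * t)"
    by (simp add: cos_diff cos_add)
  show ?case
  proof (cases "m = Suc r")
    case False
    then show ?thesis using Suc e by (simp add: algebra_simps)
  qed simp
qed simp

lemma half_frequency_sums_bounded:
  assumes s: "0 < sin (t/2)" and "m \<le> r"
  shows "\<bar>\<Sum>s=m..r. cos ((real s + 1/2) * t)\<bar> \<le> 1 / sin (t/2)"
    and "\<bar>\<Sum>s=m..r. sin ((real s + 1/2) * t)\<bar> \<le> 1 / sin (t/2)"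
proof -
  have "m \<le> Suc r" using assms by simp
  from telescope_cos_half[OF this, of t] telescope_sin_half[OF this, of t]
  have "\<bar>2 * sin (t/2) * (\<Sum>s=m..r. cos ((real s + 1/2) * t))\<bar> \<le> 2"
    and "\<bar>2 * sin (t/2) * (\<Sum>s=m..r. sin ((real s + 1/2) * t))\<bar> \<le> 2"
    by (simp_all add: atLeastLessThanSuc_atLeastAtMost del: sum.cl_ivl_Suc)
      (smt (verit) sin_ge_minus_one sin_le_one cos_ge_minus_one cos_le_one)+
  then show "\<bar>\<Sum>s=m..r. cos ((real s + 1/2) * t)\<bar> \<le> 1 / sin (t/2)"
    and "\<bar>\<Sum>s=m..r. sin ((real s + 1/2) * t)\<bar> \<le> 1 / sin (t/2)"
    using s by (simp_all add: abs_mult field_simps)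
qed

section \<open>Abel summation\<close>

lemma abel_identity:
  fixes \<alpha> P :: "nat \<Rightarrow> real"
  assumes "m \<le> n"
  shows "(\<Sum>r=m..n. \<alpha> r * P r)
           = (\<Sum>s=m..n. \<alpha> s) * P n - (\<Sum>r=m..<n. (\<Sum>s=m..r. \<alpha> s) * (P (Suc r) - P r))"
  using assms
proof (induction n)
  case (Suc n)
  show ?case
  proof (cases "m = Suc n")
    case False
    then show ?thesis using Suc by (simp add: algebra_simps)
  qed simp
qed simp

lemma abel_bound:
  fixes \<alpha> P :: "nat \<Rightarrow> real"
  assumes "m \<le> n" and E: "\<And>r. m \<le> r \<Longrightarrow> r \<le> n \<Longrightarrow> \<bar>\<Sum>s=m..r. \<alpha> s\<bar> \<le> A"
  shows "\<bar>\<Sum>r=m..n. \<alpha> r * P r\<bar> \<le> A * (\<bar>P n\<bar> + (\<Sum>r=m..<n. \<bar>P (Suc r) - P r\<bar>))"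
proof -
  have "\<bar>\<Sum>r=m..n. \<alpha> r * P r\<bar>
      \<le> \<bar>(\<Sum>s=m..n. \<alpha> s) * P n\<bar> + \<bar>\<Sum>r=m..<n. (\<Sum>s=m..r. \<alpha> s) * (P (Suc r) - P r)\<bar>"
    unfolding abel_identity[OF assms(1)] by linarith
  also have "\<bar>(\<Sum>s=m..n. \<alpha> s) * P n\<bar> \<le> A * \<bar>P n\<bar>"
    unfolding abs_mult using E[of n] assms by (intro mult_right_mono) auto
  also have "\<bar>\<Sum>r=m..<n. (\<Sum>s=m..r. \<alpha> s) * (P (Suc r) - P r)\<bar> \<le> (\<Sum>r=m..<n. A * \<bar>P (Suc r) - P r\<bar>)"
    by (rule order_trans[OF sum_abs], intro sum_mono) (auto simp: abs_mult intro!: mult_right_mono E)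
  finally show ?thesis by (simp add: sum_distrib_left distrib_left)
qed

section \<open>Slowly varying summability matrices\<close>

locale slowly_varying =
  fixes b :: "nat \<Rightarrow> nat \<Rightarrow> real" and C :: real
  assumes stoch: "lt_stoch b"
    and var: "\<forall>r l. l \<le> r \<longrightarrow> \<bar>b r (r - l) - b (r + 1) (r + 1 - l)\<bar> \<le> C / (real r + 1) ^ 2"
begin

lemma entry_nonneg: "0 \<le> b r k"
  using stoch unfolding lt_stoch_def by (cases "k \<le> r") (auto simp: not_le)

lemma row_sum: "(\<Sum>k=0..r. b r k) = 1"
  using stoch unfolding lt_stoch_def by auto

lemma row_sum_rev: "(\<Sum>l=0..r. b r (r - l)) = 1"
  using sum.atLeastAtMost_rev[of "b r" 0 r] row_sum[of r] by simp

lemma var_Suc: "l \<le> r \<Longrightarrow> \<bar>b (Suc r) (Suc r - l) - b r (r - l)\<bar> \<le> C / (real r + 1) ^ 2"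
  using var by (auto simp: abs_minus_commute)

lemma variation_row_total: "(\<Sum>l=0..r. C / (real r + 1) ^ 2) = C / (real r + 1)"
proof -
  have "(\<Sum>l=0..r. C / (real r + 1) ^ 2) = (real r + 1) * (C / (real r + 1) ^ 2)" by simp
  also have "\<dots> = C / (real r + 1)" by (simp add: power2_eq_square)
  finally show ?thesis .
qed

lemma C_nonneg: "0 \<le> C"
  using var_Suc[of 0 0] by simp

text \<open>The entry b_{r+1,0} entering in row r+1 is small, since the other entries of the
  row are close to those of row r, which already sum to 1.\<close>
lemma first_entry_small: "b (Suc r) 0 \<le> C / (real r + 1)"
proof -
  have "(\<Sum>k=1..Suc r. b (Suc r) k) = (\<Sum>l=1..Suc r. b (Suc r) (Suc r + 1 - l))"
    using sum.atLeastAtMost_rev[of "b (Suc r)" 1 "Suc r"] by simp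
  also have "\<dots> = (\<Sum>l=0..r. b (Suc r) (Suc r - l))"
    by (simp only: One_nat_def sum.shift_bounds_cl_Suc_ivl) simp
  finally have "1 = b (Suc r) 0 + (\<Sum>l=0..r. b (Suc r) (Suc r - l))"
    using row_sum[of "Suc r"] by (simp add: sum.atLeast_Suc_atMost)
  moreover have "(\<Sum>l=0..r. b r (r - l)) - (\<Sum>l=0..r. b (Suc r) (Suc r - l)) \<le> C / (real r + 1)"
    unfolding variation_row_total[symmetric] sum_subtractf[symmetric]
    by (intro sum_mono) (use var_Suc in \<open>force simp: abs_le_iff\<close>)
  ultimately show ?thesis using row_sum_rev[of r] by linarith
qed

definition rev_mean :: "(nat \<Rightarrow> real) \<Rightarrow> nat \<Rightarrow> real" where
  "rev_mean g r = (\<Sum>l=0..r. b r (r - l) * g l)"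

lemma rev_mean_bound:
  assumes "\<And>l. \<bar>g l\<bar> \<le> 1"
  shows "\<bar>rev_mean g r\<bar> \<le> 1"
proof -
  have "\<bar>rev_mean g r\<bar> \<le> (\<Sum>l=0..r. \<bar>b r (r - l) * g l\<bar>)" unfolding rev_mean_def by (rule sum_abs)
  also have "\<dots> \<le> (\<Sum>l=0..r. b r (r - l))"
    by (intro sum_mono) (auto simp: abs_mult entry_nonneg intro: mult_left_le assms)
  finally show ?thesis using row_sum_rev by simp
qed

text \<open>The variation of the reversed means is O(1/r): this is where the hypothesis on B enters.\<close>
lemma rev_mean_step:
  assumes g: "\<And>l. \<bar>g l\<bar> \<le> 1"
  shows "\<bar>rev_mean g (Suc r) - rev_mean g r\<bar> \<le> 2 * C / (real r + 1)"
proof -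
  have "rev_mean g (Suc r) - rev_mean g r
      = (\<Sum>l=0..r. (b (Suc r) (Suc r - l) - b r (r - l)) * g l) + b (Suc r) 0 * g (Suc r)"
    unfolding rev_mean_def by (simp add: sum_subtractf left_diff_distrib)
  moreover have "\<bar>\<Sum>l=0..r. (b (Suc r) (Suc r - l) - b r (r - l)) * g l\<bar> \<le> C / (real r + 1)"
  proof -
    have "\<bar>\<Sum>l=0..r. (b (Suc r) (Suc r - l) - b r (r - l)) * g l\<bar>
        \<le> (\<Sum>l=0..r. \<bar>b (Suc r) (Suc r - l) - b r (r - l)\<bar> * \<bar>g l\<bar>)"
      by (rule order_trans[OF sum_abs]) (simp add: abs_mult)
    also have "\<dots> \<le> (\<Sum>l=0..r. C / (real r + 1) ^ 2)"
    proof (intro sum_mono)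
      fix l assume "l \<in> {0..r}"
      then show "\<bar>b (Suc r) (Suc r - l) - b r (r - l)\<bar> * \<bar>g l\<bar> \<le> C / (real r + 1) ^ 2"
        using var_Suc[of l r] g[of l] by (metis abs_ge_zero atLeastAtMost_iff mult_left_le order_trans)
    qed
    finally show ?thesis by (simp only: variation_row_total)
  qed
  moreover have "\<bar>b (Suc r) 0 * g (Suc r)\<bar> \<le> C / (real r + 1)"
    using first_entry_small[of r] g[of "Suc r"] entry_nonneg[of "Suc r" 0]
    by (metis abs_mult abs_of_nonneg mult_left_le order_trans)
  ultimately show ?thesis by linarith
qed

lemma row_cos_mean_split:
  "(\<Sum>k=0..r. b r k * cos ((real k + 1/2) * t)) =
     cos ((real r + 1/2) * t) * rev_mean (\<lambda>l. cos (real l * t)) r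
   + sin ((real r + 1/2) * t) * rev_mean (\<lambda>l. sin (real l * t)) r"
proof -
  have "(\<Sum>k=0..r. b r k * cos ((real k + 1/2) * t))
      = (\<Sum>l=0..r. b r (r - l) * cos ((real (r - l) + 1/2) * t))"
    using sum.atLeastAtMost_rev[of "\<lambda>k. b r k * cos ((real k + 1/2) * t)" 0 r] by simp
  also have "\<dots> = (\<Sum>l=0..r. b r (r - l) * (cos ((real r + 1/2) * t) * cos (real l * t)
                                           + sin ((real r + 1/2) * t) * sin (real l * t)))"
  proof (intro sum.cong refl)
    fix l assume "l \<in> {0..r}"
    then have "(real (r - l) + 1/2) * t = (real r + 1/2) * t - real l * t"
      by (simp add: of_nat_diff algebra_simps)
    then show "b r (r - l) * cos ((real (r - l) + 1/2) * t) = b r (r - l) *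
        (cos ((real r + 1/2) * t) * cos (real l * t) + sin ((real r + 1/2) * t) * sin (real l * t))"
      by (simp add: cos_diff)
  qed
  finally show ?thesis
    unfolding rev_mean_def by (simp add: sum_distrib_left sum.distrib algebra_simps)
qed

lemma row_cos_mean_bound: "\<bar>\<Sum>k=0..r. b r k * cos ((real k + 1/2) * t)\<bar> \<le> 1"
proof -
  have "\<bar>\<Sum>k=0..r. b r k * cos ((real k + 1/2) * t)\<bar> \<le> (\<Sum>k=0..r. \<bar>b r k * cos ((real k + 1/2) * t)\<bar>)"
    by (rule sum_abs)
  also have "\<dots> \<le> (\<Sum>k=0..r. b r k)"
    by (intro sum_mono) (auto simp: abs_mult entry_nonneg intro: mult_left_le)
  finally show ?thesis using row_sum by simp
qed

lemma abel_rev_mean: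
  assumes "m \<le> n" and s: "0 < sin (t/2)" and g: "\<And>l. \<bar>g l\<bar> \<le> 1"
    and E: "\<And>r. m \<le> r \<Longrightarrow> \<bar>\<Sum>s=m..r. \<alpha> s\<bar> \<le> 1 / sin (t/2)"
  shows "\<bar>\<Sum>r=m..n. \<alpha> r * rev_mean g r\<bar> \<le> (1 / sin (t/2)) * (1 + 2 * C * (\<Sum>r=m..n. 1 / (real r + 1)))"
proof -
  have "\<bar>\<Sum>r=m..n. \<alpha> r * rev_mean g r\<bar>
      \<le> (1 / sin (t/2)) * (\<bar>rev_mean g n\<bar> + (\<Sum>r=m..<n. \<bar>rev_mean g (Suc r) - rev_mean g r\<bar>))"
    using E by (intro abel_bound assms) auto
  also have "\<dots> \<le> (1 / sin (t/2)) * (1 + 2 * C * (\<Sum>r=m..n. 1 / (real r + 1)))"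
  proof (intro mult_left_mono add_mono)
    have "(\<Sum>r=m..<n. \<bar>rev_mean g (Suc r) - rev_mean g r\<bar>) \<le> (\<Sum>r=m..<n. 2 * C * (1 / (real r + 1)))"
      using rev_mean_step[OF g] by (intro sum_mono) simp
    also have "\<dots> \<le> (\<Sum>r=m..n. 2 * C * (1 / (real r + 1)))"
      using C_nonneg by (intro sum_mono2) auto
    finally show "(\<Sum>r=m..<n. \<bar>rev_mean g (Suc r) - rev_mean g r\<bar>) \<le> 2 * C * (\<Sum>r=m..n. 1 / (real r + 1))"
      by (simp add: sum_distrib_left)
  qed (use s rev_mean_bound g in auto)
  finally show ?thesis .
qed

text \<open>The key estimate: the double sum of b_{r,k} cos((k+1/2)t) over r \<le> n grows like
  m + O(1/sin(t/2)) times a harmonic tail; the first m rows are estimated trivially.\<close>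
lemma double_cos_sum_bound:
  assumes s: "0 < sin (t/2)" and m: "m \<le> Suc n"
  shows "\<bar>\<Sum>r=0..n. \<Sum>k=0..r. b r k * cos ((real k + 1/2) * t)\<bar>
     \<le> real m + (2 / sin (t/2)) * (1 + 2 * C * (\<Sum>r=m..n. 1 / (real r + 1)))"
proof -
  define c where "c r = (\<Sum>k=0..r. b r k * cos ((real k + 1/2) * t))" for r
  define X where "X = (1 / sin (t/2)) * (1 + 2 * C * (\<Sum>r=m..n. 1 / (real r + 1)))"
  have X0: "0 \<le> X"
    unfolding X_def using s C_nonneg by (intro mult_nonneg_nonneg add_nonneg_nonneg sum_nonneg) auto
  have "\<bar>\<Sum>r=0..<m. c r\<bar> \<le> (\<Sum>r=0..<m. \<bar>c r\<bar>)" by (rule sum_abs)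
  also have "\<dots> \<le> (\<Sum>r=0..<m. 1)" unfolding c_def by (intro sum_mono row_cos_mean_bound)
  finally have low: "\<bar>\<Sum>r=0..<m. c r\<bar> \<le> real m" by simp
  have high: "\<bar>\<Sum>r=m..n. c r\<bar> \<le> 2 * X"
  proof (cases "m \<le> n")
    case True
    have "(\<Sum>r=m..n. c r) = (\<Sum>r=m..n. cos ((real r + 1/2) * t) * rev_mean (\<lambda>l. cos (real l * t)) r)
                          + (\<Sum>r=m..n. sin ((real r + 1/2) * t) * rev_mean (\<lambda>l. sin (real l * t)) r)"
      unfolding c_def row_cos_mean_split sum.distrib ..
    moreover have "\<bar>\<Sum>r=m..n. cos ((real r + 1/2) * t) * rev_mean (\<lambda>l. cos (real l * t)) r\<bar> \<le> X"
      and "\<bar>\<Sum>r=m..n. sin ((real r + 1/2) * t) * rev_mean (\<lambda>l. sin (real l * t)) r\<bar> \<le> X"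
      unfolding X_def using half_frequency_sums_bounded[OF s] by (intro abel_rev_mean True s; simp)+
    ultimately show ?thesis by linarith
  qed (use X0 in simp)
  have "(\<Sum>r=0..n. c r) = (\<Sum>r=0..<m. c r) + (\<Sum>r=m..n. c r)"
    using m by (metis atLeast0AtMost atLeast0LessThan atLeastLessThanSuc_atLeastAtMost
        sum.atLeastLessThan_concat zero_le)
  then show ?thesis using low high unfolding c_def X_def by linarith
qed

end

section \<open>Integrability of periodic functions\<close>

lemma absolutely_integrable_shift:
  fixes g :: "real \<Rightarrow> real"
  assumes "g absolutely_integrable_on {a+c..b+c}"
  shows "(\<lambda>t. g (t + c)) absolutely_integrable_on {a..b}"
proof -
  have "(g \<circ> (+) c) integrable_on {a..b}" "((\<lambda>x. norm (g x)) \<circ> (+) c) integrable_on {a..b}"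
    using assms unfolding absolutely_integrable_on_def integrable_on_shift_Icc_real by auto
  then show ?thesis unfolding absolutely_integrable_on_def by (simp add: o_def add.commute)
qed

lemma integral_shift:
  fixes g :: "real \<Rightarrow> real"
  assumes "g integrable_on {a+c..b+c}"
  shows "integral {a..b} (\<lambda>t. g (t + c)) = integral {a+c..b+c} g"
proof -
  have "((g \<circ> (+) c) has_integral integral {a+c..b+c} g) {a..b}"
    using assms unfolding has_integral_shift_Icc_real by blast
  then show ?thesis by (simp add: o_def add.commute integral_unique)
qed

lemma periodic_shift_nat:
  assumes per: "\<And>x. g (x + p) = g x"
  shows "g (x + real N * p) = g x" "g (x - real N * p) = g x"
proof -
  show "g (x + real N * p) = g x"
  proof (induction N)
    case (Suc N)
    have "g (x + real (Suc N) * p) = g ((x + real N * p) + p)" by (simp add: algebra_simps)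
    then show ?case using per Suc by simp
  qed simp
  show "g (x - real N * p) = g x"
  proof (induction N)
    case (Suc N)
    have "g (x - real N * p) = g ((x - real (Suc N) * p) + p)" by (simp add: algebra_simps)
    then show ?case using per Suc by simp
  qed simp
qed

lemma periodic_absolutely_integrable_translate:
  fixes g :: "real \<Rightarrow> real"
  assumes per: "\<And>x. g (x + p) = g x" and int: "g absolutely_integrable_on {a..b}"
  shows "g absolutely_integrable_on {a + real N * p..b + real N * p}"
    and "g absolutely_integrable_on {a - real N * p..b - real N * p}"
proof -
  have "(\<lambda>t. g (t - real N * p)) absolutely_integrable_on {a + real N * p..b + real N * p}"
    using absolutely_integrable_shift[where g=g and a="a + real N * p" and c="- (real N * p)" and b="b + real N * p"] int
    by simp
  moreover have "(\<lambda>t. g (t - real N * p)) = g"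
    using periodic_shift_nat(2)[of g p, OF per] by (simp add: fun_eq_iff)
  ultimately show "g absolutely_integrable_on {a + real N * p..b + real N * p}" by simp
  have "(\<lambda>t. g (t + real N * p)) absolutely_integrable_on {a - real N * p..b - real N * p}"
    using absolutely_integrable_shift[where g=g and a="a - real N * p" and c="real N * p" and b="b - real N * p"] int
    by simp
  moreover have "(\<lambda>t. g (t + real N * p)) = g"
    using periodic_shift_nat(1)[of g p, OF per] by (simp add: fun_eq_iff)
  ultimately show "g absolutely_integrable_on {a - real N * p..b - real N * p}" by simp
qed

text \<open>A function in L^1 (periodic and integrable over one period) is absolutely integrable
  over every compact interval: [-pi - 2 pi N, pi + 2 pi N] is covered by translates of [-pi, pi].\<close>
lemma L1_absolutely_integrable:
  assumes "L1_periodic f"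
  shows "f absolutely_integrable_on {a..b}"
proof -
  have per: "\<And>x. f (x + 2 * pi) = f x" and base: "f absolutely_integrable_on {-pi..pi}"
    using assms unfolding L1_periodic_def by auto
  note translate = periodic_absolutely_integrable_translate[OF per base]
  have big: "f absolutely_integrable_on {-pi - real N * (2*pi) .. pi + real N * (2*pi)}" for N
  proof (induction N)
    case (Suc N)
    define c where "c = real (Suc N) * (2*pi)"
    have c: "-pi + c = pi + real N * (2*pi)" "pi - c = -pi - real N * (2*pi)"
      "0 \<le> real N * (2*pi)" "real N * (2*pi) \<le> c"
      by (simp_all add: c_def algebra_simps)
    have lower: "f absolutely_integrable_on {-pi - c .. -pi - real N * (2*pi)}"
      using translate(2)[of "Suc N"] unfolding c_def[symmetric] c(2) .
    have "f absolutely_integrable_on {-pi - real N * (2*pi) .. pi + c}"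
      using Suc translate(1)[of "Suc N"] unfolding c_def[symmetric] c(1)
      by (rule absolutely_integrable_on_combine) (use c pi_gt_zero in linarith)+
    with lower have "f absolutely_integrable_on {-pi - c .. pi + c}"
      by (rule absolutely_integrable_on_combine) (use c pi_gt_zero in linarith)+
    then show ?case by (simp add: c_def)
  qed (use base in simp)
  obtain N :: nat where N: "real N \<ge> \<bar>a\<bar> + \<bar>b\<bar>" using real_arch_simple by blast
  have "real N \<le> real N * (2*pi)" using pi_gt3 by (simp add: mult_le_cancel_left1)
  then have "-pi - real N * (2*pi) \<le> a" "b \<le> pi + real N * (2*pi)"
    using N pi_gt_zero by linarith+
  then have "{a..b} \<subseteq> {-pi - real N * (2*pi) .. pi + real N * (2*pi)}" by auto
  then show ?thesis using big absolutely_integrable_on_subinterval by blast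
qed

lemma absolutely_integrable_mult_continuous:
  fixes g k :: "real \<Rightarrow> real"
  assumes "g absolutely_integrable_on {a..b}" "continuous_on {a..b} k"
  shows "(\<lambda>t. g t * k t) absolutely_integrable_on {a..b}"
proof -
  have "(\<lambda>t. k t * g t) absolutely_integrable_on {a..b}"
  proof (rule absolutely_integrable_bounded_measurable_product_real)
    show "k \<in> borel_measurable (lebesgue_on {a..b})"
      using assms by (intro continuous_imp_measurable_on_sets_lebesgue) auto
    show "bounded (k ` {a..b})"
      using assms by (intro compact_imp_bounded compact_continuous_image) auto
  qed (use assms in auto)
  then show ?thesis by (simp add: mult.commute)
qed

lemma psi_absolutely_integrable:
  assumes "L1_periodic f"
  shows "psi f x absolutely_integrable_on {a..b}"
proof -
  have 1: "(\<lambda>t. f (t + x)) absolutely_integrable_on {a..b}"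
    by (rule absolutely_integrable_shift) (rule L1_absolutely_integrable[OF assms])
  have "(\<lambda>t. f (t + x)) absolutely_integrable_on {-b..-a}"
    by (rule absolutely_integrable_shift) (rule L1_absolutely_integrable[OF assms])
  then have 2: "(\<lambda>t. f (-t + x)) absolutely_integrable_on {a..b}"
    using absolutely_integrable_reflect_real[where f="\<lambda>t. f (t + x)" and a="-b" and b="-a"] by simp
  have "(\<lambda>t. f (t + x) - f (-t + x)) absolutely_integrable_on {a..b}"
    by (rule set_integral_diff(1)[OF 1 2])
  then show ?thesis unfolding psi_def[abs_def] by (simp add: add.commute)
qed

lemma shifted_times_continuous_integrable:
  assumes "L1_periodic f" and "continuous_on {a..b} k"
  shows "(\<lambda>t. f (t + c) * k t) integrable_on {a..b}"
proof -
  have "(\<lambda>t. f (t + c)) absolutely_integrable_on {a..b}"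
    by (rule absolutely_integrable_shift) (rule L1_absolutely_integrable[OF assms(1)])
  then show ?thesis
    using absolutely_integrable_mult_continuous[OF _ assms(2)] set_lebesgue_integral_eq_integral(1) by blast
qed

lemma times_continuous_integrable:
  assumes "L1_periodic f" and "continuous_on {a..b} k"
  shows "(\<lambda>t. f t * k t) integrable_on {a..b}"
  using shifted_times_continuous_integrable[OF assms, of 0] by simp

lemma psi_times_continuous_integrable:
  assumes "L1_periodic f" and "continuous_on {a..b} k"
  shows "(\<lambda>t. psi f x t * k t) integrable_on {a..b}"
  using absolutely_integrable_mult_continuous[OF psi_absolutely_integrable[OF assms(1)] assms(2)]
    set_lebesgue_integral_eq_integral(1) by blast

lemma abs_psi_integrable:
  assumes "L1_periodic f"
  shows "(\<lambda>u. \<bar>psi f x u\<bar>) integrable_on {a..c}"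
  using psi_absolutely_integrable[OF assms, where x=x and a=a and b=c]
  unfolding absolutely_integrable_on_def by simp

lemma periodic_integral_step:
  fixes h :: "real \<Rightarrow> real"
  assumes per: "\<And>u. h (u + p) = h u" and int: "\<And>a b. h integrable_on {a..b}"
    and "a \<le> d" "d \<le> a + p"
  shows "integral {a..a+p} h = integral {d..d+p} h"
proof -
  have "integral {a..a+p} h = integral {a..d} h + integral {d..a+p} h"
    using assms by (intro Henstock_Kurzweil_Integration.integral_combine[symmetric] int) auto
  moreover have "integral {d..d+p} h = integral {d..a+p} h + integral {a+p..d+p} h"
    using assms by (intro Henstock_Kurzweil_Integration.integral_combine[symmetric] int) auto
  moreover have "integral {a+p..d+p} h = integral {a..d} h"
    using integral_shift[of h a p d] int per by simp
  ultimately show ?thesis by simp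
qed

lemma periodic_integral:
  fixes h :: "real \<Rightarrow> real"
  assumes per: "\<And>u. h (u + p) = h u" and int: "\<And>a b. h integrable_on {a..b}" and p: "p > 0"
  shows "integral {a..a+p} h = integral {b..b+p} h"
proof -
  have iter: "integral {a..a+p} h = integral {a + real n * d..a + real n * d + p} h"
    if "0 \<le> d" "d \<le> p" for a d and n :: nat
  proof (induction n)
    case (Suc n)
    have "integral {a + real n * d..a + real n * d + p} h
        = integral {(a + real n * d) + d..(a + real n * d) + d + p} h"
      using that by (intro periodic_integral_step per int) auto
    then show ?case using Suc by (simp add: algebra_simps)
  qed simp
  have forward: "integral {a..a+p} h = integral {b..b+p} h" if "a \<le> b" for a b
  proof -
    obtain n :: nat where n: "real n \<ge> (b - a) / p + 1" using real_arch_simple by blast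
    have npos: "real n > 0" using n that p by (smt (verit) divide_nonneg_pos)
    define d where "d = (b - a) / real n"
    have d0: "0 \<le> d" using that npos by (simp add: d_def)
    have "(b - a) / p \<le> real n" using n by simp
    then have "b - a \<le> real n * p" using p by (simp add: divide_le_eq mult.commute)
    then have dp: "d \<le> p" using npos by (simp add: d_def divide_le_eq mult.commute)
    have "a + real n * d = b" using npos by (simp add: d_def)
    then show ?thesis using iter[OF d0 dp, of a n] by simp
  qed
  show ?thesis
  proof (cases "a \<le> b")
    case False
    then show ?thesis using forward[of b a] by simp
  qed (rule forward)
qed

section \<open>Integral representation of the conjugate means\<close>

text \<open>Each term of the conjugate series is an integral of psi_x against sin(nu t) over [0, pi]:
  by periodicity the Fourier integral may be taken over [x - pi, x + pi], and the substitution
  u = x + t followed by folding [-pi, 0] onto [0, pi] produces psi_x.\<close>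
lemma conj_term_integral:
  assumes L: "L1_periodic f"
  shows "fourier_a f \<nu> * sin (real \<nu> * x) - fourier_b f \<nu> * cos (real \<nu> * x)
     = -(1/pi) * integral {0..pi} (\<lambda>t. psi f x t * sin (real \<nu> * t))"
proof -
  have per: "\<And>x. f (x + 2 * pi) = f x" using L unfolding L1_periodic_def by auto
  define h where "h u = f u * sin (real \<nu> * (x - u))" for u
  have h_int: "h integrable_on {a..b}" for a b
    unfolding h_def by (intro times_continuous_integrable L continuous_intros)
  have h_per: "h (u + 2*pi) = h u" for u
  proof -
    have "sin (real \<nu> * (x - (u + 2*pi))) = sin (real \<nu> * (x - u) - real \<nu> * (2 * pi))"
      by (simp add: algebra_simps)
    also have "\<dots> = sin (real \<nu> * (x - u))"
      by (rule periodic_shift_nat(2)[of sin]) simp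
    finally show ?thesis unfolding h_def using per by simp
  qed
  have "fourier_a f \<nu> * sin (real \<nu> * x) - fourier_b f \<nu> * cos (real \<nu> * x)
      = (1/pi) * (integral {-pi..pi} (\<lambda>u. f u * cos (real \<nu> * u) * sin (real \<nu> * x))
                 - integral {-pi..pi} (\<lambda>u. f u * sin (real \<nu> * u) * cos (real \<nu> * x)))"
    unfolding fourier_a_def fourier_b_def integral_mult_left by (simp add: algebra_simps)
  also have "\<dots> = (1/pi) * integral {-pi..pi} h"
  proof -
    have "(\<lambda>u. f u * cos (real \<nu> * u)) integrable_on {-pi..pi}"
      "(\<lambda>u. f u * sin (real \<nu> * u)) integrable_on {-pi..pi}"
      by (intro times_continuous_integrable L continuous_intros)+
    then have "integral {-pi..pi} (\<lambda>u. f u * cos (real \<nu> * u) * sin (real \<nu> * x))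
        - integral {-pi..pi} (\<lambda>u. f u * sin (real \<nu> * u) * cos (real \<nu> * x))
        = integral {-pi..pi} (\<lambda>u. f u * cos (real \<nu> * u) * sin (real \<nu> * x)
                                   - f u * sin (real \<nu> * u) * cos (real \<nu> * x))"
      by (subst integral_diff) (auto intro: integrable_on_mult_left)
    also have "(\<lambda>u. f u * cos (real \<nu> * u) * sin (real \<nu> * x) - f u * sin (real \<nu> * u) * cos (real \<nu> * x)) = h"
    proof
      fix u
      have "sin (real \<nu> * (x - u)) = sin (real \<nu> * x - real \<nu> * u)" by (simp add: algebra_simps)
      then show "f u * cos (real \<nu> * u) * sin (real \<nu> * x) - f u * sin (real \<nu> * u) * cos (real \<nu> * x) = h u"
        unfolding h_def by (simp add: sin_diff algebra_simps)
    qed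
    finally show ?thesis by simp
  qed
  also have "integral {-pi..pi} h = integral {(-pi + x)..(-pi + x) + 2*pi} h"
    using periodic_integral[OF h_per h_int, of "-pi" "-pi + x"] by simp
  also have "\<dots> = integral {-pi..pi} (\<lambda>t. h (t + x))"
    using integral_shift[of h "-pi" x pi] h_int by (simp add: algebra_simps)
  also have "\<dots> = - integral {-pi..pi} (\<lambda>t. f (t + x) * sin (real \<nu> * t))"
  proof -
    have "(\<lambda>t. h (t + x)) = (\<lambda>t. - (f (t + x) * sin (real \<nu> * t)))"
      unfolding h_def by (auto simp: algebra_simps)
    then show ?thesis by simp
  qed
  also have "integral {-pi..pi} (\<lambda>t. f (t + x) * sin (real \<nu> * t))
      = integral {0..pi} (\<lambda>t. psi f x t * sin (real \<nu> * t))"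
  proof -
    have i1: "(\<lambda>t. f (-t + x) * sin (real \<nu> * t)) integrable_on {0..pi}"
    proof -
      have "(\<lambda>t. f (t + x)) absolutely_integrable_on {-pi..0}"
        by (rule absolutely_integrable_shift) (rule L1_absolutely_integrable[OF L])
      then have "(\<lambda>t. f (-t + x)) absolutely_integrable_on {0..pi}"
        using absolutely_integrable_reflect_real[where f="\<lambda>t. f (t + x)" and a="-pi" and b="0"] by simp
      then have "(\<lambda>t. f (-t + x) * sin (real \<nu> * t)) absolutely_integrable_on {0..pi}"
        by (rule absolutely_integrable_mult_continuous) (intro continuous_intros)
      then show ?thesis using set_lebesgue_integral_eq_integral(1) by blast
    qed
    have i2: "(\<lambda>t. f (t + x) * sin (real \<nu> * t)) integrable_on {0..pi}"
      by (intro shifted_times_continuous_integrable L continuous_intros)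
    have "integral {-pi..pi} (\<lambda>t. f (t + x) * sin (real \<nu> * t))
        = integral {-pi..0} (\<lambda>t. f (t + x) * sin (real \<nu> * t)) + integral {0..pi} (\<lambda>t. f (t + x) * sin (real \<nu> * t))"
      by (rule Henstock_Kurzweil_Integration.integral_combine[symmetric])
        (auto intro!: shifted_times_continuous_integrable L continuous_intros)
    also have "integral {-pi..0} (\<lambda>t. f (t + x) * sin (real \<nu> * t))
        = - integral {0..pi} (\<lambda>t. f (-t + x) * sin (real \<nu> * t))"
      using Henstock_Kurzweil_Integration.integral_reflect_real[of 0 "-pi" "\<lambda>t. f (t + x) * sin (real \<nu> * t)"]
        integral_neg[of "{0..pi}" "\<lambda>t. f (-t + x) * sin (real \<nu> * t)"]
      by (simp add: algebra_simps)
    also have "- integral {0..pi} (\<lambda>t. f (-t + x) * sin (real \<nu> * t))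
               + integral {0..pi} (\<lambda>t. f (t + x) * sin (real \<nu> * t))
        = integral {0..pi} (\<lambda>t. psi f x t * sin (real \<nu> * t))"
      using integral_diff[OF i2 i1] unfolding psi_def by (simp add: algebra_simps)
    finally show ?thesis .
  qed
  finally show ?thesis by simp
qed

lemma conj_partial_sum_integral:
  assumes L: "L1_periodic f"
  shows "conj_partial_sum f k x = -(1/pi) * integral {0..pi} (\<lambda>t. psi f x t * conj_dirichlet k t)"
proof -
  have "conj_partial_sum f k x = -(1/pi) * (\<Sum>\<nu>=1..k. integral {0..pi} (\<lambda>t. psi f x t * sin (real \<nu> * t)))"
    unfolding conj_partial_sum_def conj_term_integral[OF L] by (simp add: sum_distrib_left)
  also have "(\<Sum>\<nu>=1..k. integral {0..pi} (\<lambda>t. psi f x t * sin (real \<nu> * t)))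
      = integral {0..pi} (\<lambda>t. \<Sum>\<nu>=1..k. psi f x t * sin (real \<nu> * t))"
    by (rule Henstock_Kurzweil_Integration.integral_sum[symmetric])
      (auto intro!: psi_times_continuous_integrable L continuous_intros)
  finally show ?thesis unfolding conj_dirichlet_def by (simp add: sum_distrib_left)
qed

definition mean_kernel :: "(nat \<Rightarrow> nat \<Rightarrow> real) \<Rightarrow> nat \<Rightarrow> real \<Rightarrow> real" where
  "mean_kernel b n t = (\<Sum>r=0..n. \<Sum>k=0..r. cesaro n r * b r k * conj_dirichlet k t)"

lemma mean_kernel_continuous: "continuous_on S (mean_kernel b n)"
  unfolding mean_kernel_def conj_dirichlet_def by (intro continuous_intros)

lemma T_conj_integral:
  assumes L: "L1_periodic f"
  shows "T_conj cesaro b f n x = -(1/pi) * integral {0..pi} (\<lambda>t. psi f x t * mean_kernel b n t)"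
proof -
  have int: "(\<lambda>t. psi f x t * (c * conj_dirichlet k t)) integrable_on {0..pi}" for c k
    unfolding conj_dirichlet_def by (intro psi_times_continuous_integrable L continuous_intros)
  have "T_conj cesaro b f n x
      = -(1/pi) * (\<Sum>r=0..n. \<Sum>k=0..r. cesaro n r * b r k * integral {0..pi} (\<lambda>t. psi f x t * conj_dirichlet k t))"
    unfolding T_conj_def conj_partial_sum_integral[OF L] by (simp add: sum_distrib_left algebra_simps)
  also have "(\<Sum>r=0..n. \<Sum>k=0..r. cesaro n r * b r k * integral {0..pi} (\<lambda>t. psi f x t * conj_dirichlet k t))
     = (\<Sum>r=0..n. \<Sum>k=0..r. integral {0..pi} (\<lambda>t. psi f x t * (cesaro n r * b r k * conj_dirichlet k t)))"
    by (intro sum.cong refl)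
      (simp only: Henstock_Kurzweil_Integration.integral_mult_right[symmetric] ac_simps)
  also have "\<dots> = (\<Sum>r=0..n. integral {0..pi} (\<lambda>t. \<Sum>k=0..r. psi f x t * (cesaro n r * b r k * conj_dirichlet k t)))"
    by (intro sum.cong refl Henstock_Kurzweil_Integration.integral_sum[symmetric]) (auto intro: int)
  also have "\<dots> = integral {0..pi} (\<lambda>t. \<Sum>r=0..n. \<Sum>k=0..r. psi f x t * (cesaro n r * b r k * conj_dirichlet k t))"
    by (intro Henstock_Kurzweil_Integration.integral_sum[symmetric] integrable_sum) (auto intro: int)
  finally show ?thesis unfolding mean_kernel_def by (simp add: sum_distrib_left)
qed

definition harmonic_tail :: "nat \<Rightarrow> nat \<Rightarrow> real" where
  "harmonic_tail n j = (\<Sum>r=j..n. 1 / (real r + 1))"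

lemma harmonic_tail_nonneg: "0 \<le> harmonic_tail n j"
  unfolding harmonic_tail_def by (intro sum_nonneg) auto

lemma harmonic_tail_antimono: "1 \<le> j \<Longrightarrow> harmonic_tail n j \<le> harmonic_tail n (j - 1)"
  unfolding harmonic_tail_def by (intro sum_mono2) auto

text \<open>For j in the first half of [0, n] the tail still contains about n/2 terms of size 1/(n+1).\<close>
lemma harmonic_tail_ge_half:
  assumes "i \<le> n div 2"
  shows "1/2 \<le> harmonic_tail n i"
proof -
  have "2 * i \<le> n" using assms by linarith
  then have "real n + 1 \<le> 2 * real (Suc n - i)" by linarith
  then have "1/2 \<le> real (Suc n - i) / (real n + 1)" by (simp add: field_simps)
  also have "\<dots> = (\<Sum>r=i..n. 1 / (real n + 1))" by simp
  also have "\<dots> \<le> harmonic_tail n i"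
    unfolding harmonic_tail_def by (intro sum_mono) (auto simp: frac_le)
  finally show ?thesis .
qed

section \<open>Estimates for the mean kernel\<close>

context slowly_varying
begin

lemma mean_kernel_abs_le: "\<bar>mean_kernel b n t\<bar> \<le> real n"
proof -
  have "\<bar>mean_kernel b n t\<bar> \<le> (\<Sum>r=0..n. \<Sum>k=0..r. \<bar>cesaro n r * b r k * conj_dirichlet k t\<bar>)"
    unfolding mean_kernel_def by (rule order_trans[OF sum_abs sum_mono[OF sum_abs]])
  also have "\<dots> \<le> (\<Sum>r=0..n. \<Sum>k=0..r. cesaro n r * b r k * real n)"
  proof (intro sum_mono)
    fix r k assume "r \<in> {0..n}" "k \<in> {0..r}"
    then have "\<bar>conj_dirichlet k t\<bar> \<le> real n" using conj_dirichlet_abs_le[of k t] by auto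
    moreover have "0 \<le> cesaro n r * b r k" using entry_nonneg by (simp add: cesaro_def)
    ultimately show "\<bar>cesaro n r * b r k * conj_dirichlet k t\<bar> \<le> cesaro n r * b r k * real n"
      unfolding abs_mult[of "cesaro n r * b r k"] by (simp add: mult_left_mono)
  qed
  also have "\<dots> = (\<Sum>r=0..n. real n / (real n + 1))"
  proof (intro sum.cong refl)
    fix r assume "r \<in> {0..n}"
    then have "(\<Sum>k=0..r. cesaro n r * b r k * real n) = (real n / (real n + 1)) * (\<Sum>k=0..r. b r k)"
      by (simp add: cesaro_def sum_distrib_left sum_divide_distrib mult.commute)
    then show "(\<Sum>k=0..r. cesaro n r * b r k * real n) = real n / (real n + 1)"
      using row_sum by simp
  qed
  also have "\<dots> = real n" by (simp add: field_simps)
  finally show ?thesis .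
qed

lemma mean_kernel_minus_cot:
  assumes s: "sin (t/2) \<noteq> 0"
  shows "mean_kernel b n t - cot (t/2) / 2
     = - (\<Sum>r=0..n. \<Sum>k=0..r. b r k * cos ((real k + 1/2) * t)) / ((real n + 1) * (2 * sin (t/2)))"
proof -
  define s2 where "s2 = 2 * sin (t/2)"
  have s2: "s2 \<noteq> 0" using s by (simp add: s2_def)
  have D: "conj_dirichlet k t = (cos (t/2) - cos ((real k + 1/2) * t)) / s2" for k
    using conj_dirichlet_closed[of t k] s2 unfolding s2_def by (simp add: field_simps)
  have cos_part: "(\<Sum>r=0..n. \<Sum>k=0..r. b r k * cos (t/2)) = (real n + 1) * cos (t/2)"
    by (simp add: row_sum flip: sum_distrib_right)
  have "mean_kernel b n t
      = (\<Sum>r=0..n. \<Sum>k=0..r. (b r k * cos (t/2) - b r k * cos ((real k + 1/2) * t)) / ((real n + 1) * s2))"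
    unfolding mean_kernel_def D by (intro sum.cong refl) (auto simp: cesaro_def field_simps)
  also have "\<dots> = ((real n + 1) * cos (t/2) - (\<Sum>r=0..n. \<Sum>k=0..r. b r k * cos ((real k + 1/2) * t)))
                  / ((real n + 1) * s2)"
    by (simp only: cos_part sum_subtractf flip: sum_divide_distrib)
  also have "\<dots> = cot (t/2) / 2 - (\<Sum>r=0..n. \<Sum>k=0..r. b r k * cos ((real k + 1/2) * t)) / ((real n + 1) * s2)"
    using s2 by (simp add: cot_def s2_def diff_divide_distrib)
  finally show ?thesis unfolding s2_def by simp
qed

text \<open>The bound for |K_n(t) - cot(t/2)/2| on [pi/(j+1), pi] (Jordan's inequality gives
  1/sin(t/2) \<le> j+1 there).\<close>
definition excess_bound :: "nat \<Rightarrow> nat \<Rightarrow> real" where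
  "excess_bound n j = (real j + 1)^2 * (3 + 4 * C * harmonic_tail n j) / (2 * (real n + 1))"

lemma excess_bound_nonneg: "0 \<le> excess_bound n j"
  unfolding excess_bound_def using C_nonneg harmonic_tail_nonneg by simp

lemma mean_kernel_minus_cot_bound:
  assumes j: "1 \<le> j" "j \<le> n" and t: "pi / (real j + 1) \<le> t" "t \<le> pi"
  shows "\<bar>mean_kernel b n t - cot (t/2) / 2\<bar> \<le> excess_bound n j"
proof -
  define H where "H = harmonic_tail n j"
  define X where "X = \<bar>\<Sum>r=0..n. \<Sum>k=0..r. b r k * cos ((real k + 1/2) * t)\<bar>"
  have H0: "0 \<le> 1 + 2 * C * H" unfolding H_def using C_nonneg harmonic_tail_nonneg by simp
  have "0 < t" using t(1) by (smt (verit) divide_pos_pos of_nat_0_le_iff pi_gt_zero)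
  then have "t / pi \<le> sin (t/2)" using t by (intro jordan_half) auto
  moreover have "1 / (real j + 1) \<le> t / pi" using t(1) pi_gt_zero by (simp add: field_simps)
  ultimately have s1: "1 / (real j + 1) \<le> sin (t/2)" by linarith
  then have spos: "0 < sin (t/2)" by (smt (verit) divide_pos_pos of_nat_0_le_iff)
  have inv: "1 / sin (t/2) \<le> real j + 1" using s1 spos by (simp add: field_simps)
  have "X \<le> real j + 2 * (1 / sin (t/2)) * (1 + 2 * C * H)"
    using double_cos_sum_bound[OF spos, of j n] j unfolding X_def H_def harmonic_tail_def by simp
  also have "\<dots> \<le> real j + 2 * (real j + 1) * (1 + 2 * C * H)"
    using inv H0 by (intro add_left_mono mult_right_mono) auto
  also have "\<dots> \<le> (real j + 1) * (3 + 4 * C * H)" by (simp add: algebra_simps)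
  finally have X: "X \<le> (real j + 1) * (3 + 4 * C * H)" .
  have "\<bar>mean_kernel b n t - cot (t/2) / 2\<bar> = X * (1 / sin (t/2)) / (2 * (real n + 1))"
    unfolding mean_kernel_minus_cot[OF spos[THEN less_imp_neq, symmetric]] X_def using spos
    by (simp add: abs_divide field_simps)
  also have "\<dots> \<le> ((real j + 1) * (3 + 4 * C * H)) * (real j + 1) / (2 * (real n + 1))"
    using X inv spos H0 by (intro divide_right_mono mult_mono) auto
  also have "\<dots> = excess_bound n j" unfolding excess_bound_def H_def by (simp add: power2_eq_square)
  finally show ?thesis .
qed

end

section \<open>Averages of quasi-decreasing sequences\<close>

lemma sum_linear: "(\<Sum>k=0..n. real k + 1) = (real n + 1) * (real n + 2) / 2"
  by (induction n) (auto simp: field_simps)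

lemma sum_half_index: "(\<Sum>k=0..Suc (2*N). g (k div 2)) = 2 * (\<Sum>i=0..N. (g i :: real))"
proof (induction N)
  case (Suc N)
  have "Suc (Suc (2*N)) div 2 = Suc N" "Suc (Suc (Suc (2*N))) div 2 = Suc N" by presburger+
  moreover have "Suc (2 * Suc N) = Suc (Suc (Suc (2*N)))" by simp
  ultimately show ?case using Suc by simp
qed (simp add: numeral_2_eq_2)

text \<open>A nonnegative sequence W with (k+1) W_j \<le> (j+1) W_k for k \<le> j (i.e. (k+1) W_k decreases
  at most like a constant: this is the behaviour of w~_x f(pi/(k+1))) is controlled by its
  averages, also when these are weighted by the harmonic tails.\<close>
context
  fixes W :: "nat \<Rightarrow> real"
  assumes W_nonneg: "\<And>k. 0 \<le> W k"
    and W_quasi_mono: "\<And>k j. k \<le> j \<Longrightarrow> W j * (real k + 1) \<le> W k * (real j + 1)"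
begin

lemma last_le_average: "W n \<le> (2 / (real n + 1)) * (\<Sum>k=0..n. W k)"
proof -
  have "(\<Sum>k=0..n. (real k + 1) / (real n + 1)) = ((real n + 1) * (real n + 2) / 2) / (real n + 1)"
    unfolding sum_divide_distrib[symmetric] sum_linear ..
  also have "\<dots> = (real n + 2) / 2" by (simp add: field_simps)
  finally have "W n * ((real n + 2) / 2) = (\<Sum>k=0..n. W n * ((real k + 1) / (real n + 1)))"
    unfolding sum_distrib_left[symmetric] by simp
  also have "\<dots> \<le> (\<Sum>k=0..n. W k)"
    using W_quasi_mono by (intro sum_mono) (simp add: field_simps)
  finally have "W n * ((real n + 2) / 2) \<le> (\<Sum>k=0..n. W k)" .
  moreover have "W n * ((real n + 1) / 2) \<le> W n * ((real n + 2) / 2)"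
    using W_nonneg by (intro mult_left_mono) auto
  ultimately show ?thesis by (simp add: field_simps)
qed

lemma sum_le_harmonic_weighted: "(\<Sum>k=0..n. W k) \<le> 8 * (\<Sum>k=0..n. W k * harmonic_tail n k)"
proof -
  have "W k \<le> 2 * W (k div 2)" for k
  proof -
    have "k \<le> 2 * (k div 2) + 1" by presburger
    then have "real k \<le> real (2 * (k div 2) + 1)" by (rule of_nat_mono)
    have "W k * (real (k div 2) + 1) \<le> W (k div 2) * (real k + 1)" using W_quasi_mono by simp
    also have "\<dots> \<le> W (k div 2) * (2 * (real (k div 2) + 1))"
      using W_nonneg \<open>real k \<le> real (2 * (k div 2) + 1)\<close> by (intro mult_left_mono) auto
    also have "\<dots> = (2 * W (k div 2)) * (real (k div 2) + 1)" by simp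
    finally show ?thesis by (rule mult_right_le_imp_le) simp
  qed
  then have "(\<Sum>k=0..n. W k) \<le> (\<Sum>k=0..n. 2 * W (k div 2))"
    by (intro sum_mono)
  also have "\<dots> \<le> 2 * (\<Sum>k=0..Suc (2 * (n div 2)). W (k div 2))"
    unfolding sum_distrib_left[symmetric] using W_nonneg by (intro mult_left_mono sum_mono2) auto
  also have "\<dots> = 4 * (\<Sum>i=0..n div 2. W i)" unfolding sum_half_index by simp
  also have "(\<Sum>i=0..n div 2. W i) \<le> (\<Sum>i=0..n div 2. 2 * (W i * harmonic_tail n i))"
  proof (intro sum_mono)
    fix i assume "i \<in> {0..n div 2}"
    then have "W i * (1/2) \<le> W i * harmonic_tail n i"
      using W_nonneg harmonic_tail_ge_half by (intro mult_left_mono) auto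
    then show "W i \<le> 2 * (W i * harmonic_tail n i)" by simp
  qed
  also have "\<dots> \<le> 2 * (\<Sum>i=0..n. W i * harmonic_tail n i)"
    unfolding sum_distrib_left[symmetric] using W_nonneg harmonic_tail_nonneg
    by (intro mult_left_mono sum_mono2) auto
  finally show ?thesis by simp
qed

lemma last_le_harmonic_weighted:
  "W n \<le> 16 * ((1 / (real n + 1)) * (\<Sum>k=0..n. W k * harmonic_tail n k))"
  using last_le_average[of n] sum_le_harmonic_weighted[of n] by (simp add: field_simps)

end

lemma sum_by_parts:
  assumes "h 0 = 0"
  shows "(\<Sum>j=1..n. h j * (g j - g (Suc j)))
       = (\<Sum>j=1..n. (h j - h (j - 1)) * g j) - h n * (g (Suc n) :: real)"
  by (induction n) (use assms in \<open>simp_all add: algebra_simps\<close>)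

text \<open>G(d) = \<integral>_0^d |psi_x|, so that w~_x f(d) = G(d)/d.\<close>
definition psi_mass :: "(real \<Rightarrow> real) \<Rightarrow> real \<Rightarrow> real \<Rightarrow> real" where
  "psi_mass f x d = integral {0..d} (\<lambda>u. \<bar>psi f x u\<bar>)"

lemma psi_mass_nonneg: "L1_periodic f \<Longrightarrow> 0 \<le> psi_mass f x d"
  unfolding psi_mass_def by (rule integral_nonneg[OF abs_psi_integrable]) simp_all

lemma psi_mass_diff:
  assumes "L1_periodic f" "0 \<le> a" "a \<le> c"
  shows "integral {a..c} (\<lambda>u. \<bar>psi f x u\<bar>) = psi_mass f x c - psi_mass f x a"
  unfolding psi_mass_def
  using Henstock_Kurzweil_Integration.integral_combine[OF assms(2,3) abs_psi_integrable[OF assms(1), where x=x]]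
  by linarith

lemma psi_mass_mono:
  assumes "L1_periodic f" "0 \<le> a" "a \<le> c"
  shows "psi_mass f x a \<le> psi_mass f x c"
proof -
  have "0 \<le> integral {a..c} (\<lambda>u. \<bar>psi f x u\<bar>)"
    using assms by (intro integral_nonneg abs_psi_integrable) auto
  then show ?thesis using psi_mass_diff assms by fastforce
qed

lemma w_conj_psi_mass: "w_conj f x (pi / (real k + 1)) = ((real k + 1) / pi) * psi_mass f x (pi / (real k + 1))"
  unfolding w_conj_def psi_mass_def by simp

lemma w_conj_nonneg: "L1_periodic f \<Longrightarrow> 0 \<le> w_conj f x (pi / (real k + 1))"
  unfolding w_conj_psi_mass using psi_mass_nonneg by simp

lemma w_conj_quasi_mono:
  assumes "L1_periodic f" "k \<le> j"
  shows "w_conj f x (pi / (real j + 1)) * (real k + 1) \<le> w_conj f x (pi / (real k + 1)) * (real j + 1)"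
proof -
  have "psi_mass f x (pi / (real j + 1)) \<le> psi_mass f x (pi / (real k + 1))"
    using assms by (intro psi_mass_mono) (auto simp: frac_le)
  then have "((real j + 1) * (real k + 1) / pi) * psi_mass f x (pi / (real j + 1))
           \<le> ((real j + 1) * (real k + 1) / pi) * psi_mass f x (pi / (real k + 1))"
    by (intro mult_left_mono) auto
  then show ?thesis unfolding w_conj_psi_mass by (simp add: algebra_simps)
qed

lemma sum_triangle_swap: "(\<Sum>r=0..(n::nat). \<Sum>k=0..r. g r k) = (\<Sum>k=0..n. \<Sum>r=k..n. (g r k :: real))"
proof (induction n)
  case (Suc n)
  have "(\<Sum>k=0..Suc n. \<Sum>r=k..Suc n. g r k) = (\<Sum>k=0..Suc n. (\<Sum>r=k..n. g r k) + g (Suc n) k)"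
    by (intro sum.cong refl) auto
  then show ?case using Suc by (simp add: sum.distrib)
qed simp

lemma rhs_sum_harmonic:
  "rhs_sum f x n = (1 / (real n + 1)) * (\<Sum>k=0..n. w_conj f x (pi / (real k + 1)) * harmonic_tail n k)"
proof -
  have "(\<Sum>r=0..n. (1 / (real r + 1)) * (\<Sum>k=0..r. w_conj f x (pi / (real k + 1))))
      = (\<Sum>k=0..n. \<Sum>r=k..n. (1 / (real r + 1)) * w_conj f x (pi / (real k + 1)))"
    by (simp add: sum_distrib_left sum_triangle_swap)
  also have "\<dots> = (\<Sum>k=0..n. w_conj f x (pi / (real k + 1)) * harmonic_tail n k)"
    unfolding harmonic_tail_def by (simp add: sum_distrib_left sum_distrib_right mult.commute)
  finally show ?thesis unfolding rhs_sum_def by simp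
qed

lemma w_conj_le_rhs_sum:
  assumes "L1_periodic f"
  shows "w_conj f x (pi / (real n + 1)) \<le> 16 * rhs_sum f x n"
proof -
  define W where "W k = w_conj f x (pi / (real k + 1))" for k
  have "W n \<le> 16 * ((1 / (real n + 1)) * (\<Sum>k=0..n. W k * harmonic_tail n k))"
    by (rule last_le_harmonic_weighted)
      (use w_conj_nonneg[OF assms] w_conj_quasi_mono[OF assms] in \<open>auto simp: W_def\<close>)
  then show ?thesis unfolding W_def rhs_sum_harmonic .
qed

lemma half_cot_continuous:
  assumes "0 < a" "b < 2 * pi"
  shows "continuous_on {a..b} (\<lambda>t. cot (t/2))"
  unfolding cot_def
proof (intro continuous_intros ballI)
  fix t assume "t \<in> {a..b}"
  then have "0 < t/2" "t/2 < pi" using assms by auto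
  then show "sin (t/2) \<noteq> 0" using sin_gt_zero by fastforce
qed auto

locale conj_setting = slowly_varying b C for b :: "nat \<Rightarrow> nat \<Rightarrow> real" and C :: real +
  fixes f :: "real \<Rightarrow> real"
  assumes L1: "L1_periodic f"
begin

lemma cot_part_integrable: "0 < a \<Longrightarrow> (\<lambda>t. psi f x t * (cot (t/2) / 2)) integrable_on {a..pi}"
  by (intro psi_times_continuous_integrable L1 continuous_on_divide half_cot_continuous continuous_on_const) auto

lemma kernel_part_integrable: "(\<lambda>t. psi f x t * mean_kernel b n t) integrable_on {a..c}"
  by (intro psi_times_continuous_integrable L1 mean_kernel_continuous)

lemma piece_bound:
  assumes j: "1 \<le> j" "j \<le> n"
  shows "\<bar>integral {pi / (real j + 1)..pi / real j} (\<lambda>t. psi f x t * (mean_kernel b n t - cot (t/2) / 2))\<bar>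
     \<le> excess_bound n j * (psi_mass f x (pi / real j) - psi_mass f x (pi / (real j + 1)))"
proof -
  let ?I = "{pi / (real j + 1)..pi / real j}"
  have a0: "0 < pi / (real j + 1)" by simp
  have a1: "pi / (real j + 1) \<le> pi / real j" using j by (simp add: frac_le)
  have a2: "pi / real j \<le> pi" using j by (simp add: field_simps)
  have "(\<lambda>t. psi f x t * (mean_kernel b n t - cot (t/2) / 2)) integrable_on {pi / (real j + 1)..pi}"
    unfolding right_diff_distrib using a0 by (intro integrable_diff kernel_part_integrable cot_part_integrable)
  then have i1: "(\<lambda>t. psi f x t * (mean_kernel b n t - cot (t/2) / 2)) integrable_on ?I"
    by (rule integrable_subinterval_real) (use a2 in auto)
  have i2: "(\<lambda>t. excess_bound n j * \<bar>psi f x t\<bar>) integrable_on ?I"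
    by (intro integrable_on_mult_right abs_psi_integrable L1)
  have "norm (integral ?I (\<lambda>t. psi f x t * (mean_kernel b n t - cot (t/2) / 2)))
      \<le> integral ?I (\<lambda>t. excess_bound n j * \<bar>psi f x t\<bar>)"
  proof (rule integral_norm_bound_integral[OF i1 i2])
    fix t assume "t \<in> ?I"
    then have "\<bar>mean_kernel b n t - cot (t/2) / 2\<bar> \<le> excess_bound n j"
      using a2 by (intro mean_kernel_minus_cot_bound j) auto
    then have "\<bar>psi f x t\<bar> * \<bar>mean_kernel b n t - cot (t/2) / 2\<bar> \<le> \<bar>psi f x t\<bar> * excess_bound n j"
      by (rule mult_left_mono) simp
    then show "norm (psi f x t * (mean_kernel b n t - cot (t/2) / 2)) \<le> excess_bound n j * \<bar>psi f x t\<bar>"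
      by (simp add: abs_mult mult.commute)
  qed
  also have "\<dots> = excess_bound n j * (psi_mass f x (pi / real j) - psi_mass f x (pi / (real j + 1)))"
    using psi_mass_diff[OF L1 _ a1, of x] a0 by simp
  finally show ?thesis by simp
qed

definition excess_weight :: "nat \<Rightarrow> nat \<Rightarrow> real" where
  "excess_weight n j = (if j = 0 then 0 else excess_bound n j)"

lemma excess_weight_step:
  assumes "1 \<le> j"
  shows "excess_weight n j - excess_weight n (j - 1)
           \<le> 2 * real j * (3 + 4 * C * harmonic_tail n j) / (real n + 1)"
proof (cases "j = 1")
  case True
  then show ?thesis unfolding excess_weight_def excess_bound_def by (simp add: field_simps power2_eq_square)
next
  case False
  define Q where "Q = 3 + 4 * C * harmonic_tail n j"
  have Q0: "0 \<le> Q" unfolding Q_def using C_nonneg harmonic_tail_nonneg by simp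
  have rj: "real (j - 1) + 1 = real j" using assms by (simp add: of_nat_diff)
  have "real j ^ 2 * Q \<le> real j ^ 2 * (3 + 4 * C * harmonic_tail n (j - 1))"
    unfolding Q_def using C_nonneg harmonic_tail_antimono[OF assms]
    by (intro mult_left_mono add_left_mono) auto
  then have "real j ^ 2 * Q / (2 * (real n + 1)) \<le> excess_weight n (j - 1)"
    unfolding excess_weight_def excess_bound_def using False assms rj by (simp add: divide_right_mono)
  moreover have "excess_weight n j = (real j + 1) ^ 2 * Q / (2 * (real n + 1))"
    unfolding excess_weight_def excess_bound_def Q_def using assms by simp
  ultimately have "excess_weight n j - excess_weight n (j - 1)
      \<le> ((real j + 1) ^ 2 - real j ^ 2) * Q / (2 * (real n + 1))"
    by (simp add: diff_divide_distrib left_diff_distrib)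
  also have "\<dots> \<le> (4 * real j) * Q / (2 * (real n + 1))"
    using Q0 assms by (intro divide_right_mono mult_right_mono) (auto simp: power2_eq_square algebra_simps)
  also have "\<dots> = 2 * real j * Q / (real n + 1)" by (simp add: field_simps)
  finally show ?thesis unfolding Q_def .
qed

text \<open>Summing the pieces by parts turns the increments of psi_mass into values of w~.\<close>
lemma pieces_sum_bound:
  "(\<Sum>j=1..n. excess_bound n j * (psi_mass f x (pi / real j) - psi_mass f x (pi / (real j + 1))))
     \<le> (2 * pi / (real n + 1)) * (\<Sum>k=0..n. (3 + 4 * C * harmonic_tail n k) * w_conj f x (pi / (real k + 1)))"
proof -
  define g where "g j = psi_mass f x (pi / real j)" for j
  define F where "F k = (2 * pi / (real n + 1)) * ((3 + 4 * C * harmonic_tail n k) * w_conj f x (pi / (real k + 1)))" for k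
  have g0: "0 \<le> g j" for j unfolding g_def by (rule psi_mass_nonneg[OF L1])
  have F0: "0 \<le> F k" for k
    unfolding F_def using C_nonneg harmonic_tail_nonneg w_conj_nonneg[OF L1] by simp
  have "(\<Sum>j=1..n. excess_bound n j * (psi_mass f x (pi / real j) - psi_mass f x (pi / (real j + 1))))
      = (\<Sum>j=1..n. excess_weight n j * (g j - g (Suc j)))"
    unfolding excess_weight_def g_def by (intro sum.cong refl) (auto simp: add.commute)
  also have "\<dots> = (\<Sum>j=1..n. (excess_weight n j - excess_weight n (j - 1)) * g j) - excess_weight n n * g (Suc n)"
    by (rule sum_by_parts) (simp add: excess_weight_def)
  also have "\<dots> \<le> (\<Sum>j=1..n. (excess_weight n j - excess_weight n (j - 1)) * g j)"
    using g0 excess_bound_nonneg by (simp add: excess_weight_def)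
  also have "\<dots> \<le> (\<Sum>j=1..n. F (j - 1))"
  proof (intro sum_mono)
    fix j assume j: "j \<in> {1..n}"
    have rj: "real (j - 1) + 1 = real j" using j by (simp add: of_nat_diff)
    have "(excess_weight n j - excess_weight n (j - 1)) * g j
        \<le> (2 * real j * (3 + 4 * C * harmonic_tail n j) / (real n + 1)) * g j"
      using excess_weight_step[of j n] j g0 by (intro mult_right_mono) auto
    also have "\<dots> = (2 * pi / (real n + 1)) * ((3 + 4 * C * harmonic_tail n j) * w_conj f x (pi / (real (j - 1) + 1)))"
    proof -
      have wj: "w_conj f x (pi / (real (j - 1) + 1)) = (real j / pi) * g j"
        using w_conj_psi_mass[of f x "j - 1"] by (simp only: rj g_def)
      define d where "d = real n + 1"
      have "d \<noteq> 0" unfolding d_def by (simp add: add_nonneg_eq_0_iff)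
      then show ?thesis unfolding wj d_def[symmetric] by (simp add: field_simps)
    qed
    also have "\<dots> \<le> F (j - 1)"
      unfolding F_def using harmonic_tail_antimono[of j n] j C_nonneg w_conj_nonneg[OF L1, of x "j - 1"]
      by (intro mult_left_mono mult_right_mono add_left_mono) (auto simp: rj)
    finally show "(excess_weight n j - excess_weight n (j - 1)) * g j \<le> F (j - 1)" .
  qed
  also have "\<dots> = (\<Sum>k<n. F k)"
    by (induction n) auto
  also have "\<dots> \<le> (\<Sum>k=0..n. F k)" using F0 by (intro sum_mono2) auto
  finally show ?thesis unfolding F_def sum_distrib_left .
qed

text \<open>Splitting the integral at pi/(n+1): the near part uses |K_n| \<le> n, the far part the
  piecewise bound for the difference kernel.\<close>
lemma truncation_error_bound:
  "\<bar>T_conj cesaro b f n x - conj_trunc f x (pi / (real n + 1))\<bar>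
     \<le> w_conj f x (pi / (real n + 1))
       + (2 / (real n + 1)) * (\<Sum>k=0..n. (3 + 4 * C * harmonic_tail n k) * w_conj f x (pi / (real k + 1)))"
proof -
  define e where "e = pi / (real n + 1)"
  define S where "S = (\<Sum>k=0..n. (3 + 4 * C * harmonic_tail n k) * w_conj f x (pi / (real k + 1)))"
  define D where "D t = mean_kernel b n t - cot (t/2) / 2" for t
  define A where "A = integral {0..e} (\<lambda>t. psi f x t * mean_kernel b n t)"
  define B where "B = integral {e..pi} (\<lambda>t. psi f x t * D t)"
  have e0: "0 < e" and epi: "e \<le> pi" unfolding e_def by (simp_all add: field_simps)
  have TT: "T_conj cesaro b f n x - conj_trunc f x e = -(1/pi) * (A + B)"
  proof -
    define P where "P = integral {0..pi} (\<lambda>t. psi f x t * mean_kernel b n t)"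
    define Q where "Q = integral {e..pi} (\<lambda>t. psi f x t * mean_kernel b n t)"
    define R where "R = integral {e..pi} (\<lambda>t. psi f x t * (cot (t/2) / 2))"
    have PAQ: "P = A + Q"
      unfolding A_def P_def Q_def
      using Henstock_Kurzweil_Integration.integral_combine[OF _ epi kernel_part_integrable] e0 by simp
    have BQR: "B = Q - R"
      unfolding B_def D_def Q_def R_def right_diff_distrib
      by (rule integral_diff[OF kernel_part_integrable cot_part_integrable[OF e0]])
    have "T_conj cesaro b f n x - conj_trunc f x e = -(1/pi) * P - (-(1/pi) * R)"
      unfolding T_conj_integral[OF L1] conj_trunc_def P_def R_def ..
    also have "\<dots> = -(1/pi) * (A + B)" unfolding PAQ BQR by (simp add: algebra_simps)
    finally show ?thesis .
  qed
  have A_bound: "\<bar>A\<bar> \<le> pi * w_conj f x e"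
  proof -
    have "norm A \<le> integral {0..e} (\<lambda>t. real n * \<bar>psi f x t\<bar>)"
      unfolding A_def
    proof (rule integral_norm_bound_integral[OF kernel_part_integrable])
      show "(\<lambda>t. real n * \<bar>psi f x t\<bar>) integrable_on {0..e}"
        by (intro integrable_on_mult_right abs_psi_integrable L1)
      fix t
      have "\<bar>psi f x t\<bar> * \<bar>mean_kernel b n t\<bar> \<le> \<bar>psi f x t\<bar> * real n"
        using mean_kernel_abs_le[of n t] by (rule mult_left_mono) simp
      then show "norm (psi f x t * mean_kernel b n t) \<le> real n * \<bar>psi f x t\<bar>"
        by (simp add: abs_mult mult.commute)
    qed
    also have "\<dots> = real n * psi_mass f x e" unfolding psi_mass_def by simp
    also have "\<dots> \<le> (real n + 1) * psi_mass f x e"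
      using psi_mass_nonneg[OF L1] by (intro mult_right_mono) auto
    also have "\<dots> = pi * w_conj f x e" unfolding e_def w_conj_psi_mass by simp
    finally show ?thesis by simp
  qed
  have B_bound: "\<bar>B\<bar> \<le> (2 * pi / (real n + 1)) * S"
  proof -
    have "B = (\<Sum>j=1..n. integral {pi / (real j + 1)..pi / real j} (\<lambda>t. psi f x t * D t))"
    proof -
      have pieces: "integral {pi / (real m + 1)..pi} (\<lambda>t. psi f x t * D t)
          = (\<Sum>j=1..m. integral {pi / (real j + 1)..pi / real j} (\<lambda>t. psi f x t * D t))" for m
      proof (induction m)
        case (Suc m)
        have "(\<lambda>t. psi f x t * D t) integrable_on {pi / (real (Suc m) + 1)..pi}"
          unfolding D_def right_diff_distrib
          by (intro integrable_diff kernel_part_integrable cot_part_integrable) simp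
        then have "integral {pi / (real (Suc m) + 1)..pi} (\<lambda>t. psi f x t * D t)
            = integral {pi / (real (Suc m) + 1)..pi / real (Suc m)} (\<lambda>t. psi f x t * D t)
              + integral {pi / real (Suc m)..pi} (\<lambda>t. psi f x t * D t)"
          by (intro Henstock_Kurzweil_Integration.integral_combine[symmetric])
            (simp_all add: frac_le field_simps)
        then show ?case using Suc by (simp add: add.commute)
      qed simp
      then show ?thesis unfolding B_def e_def .
    qed
    then have "\<bar>B\<bar> \<le> (\<Sum>j=1..n. \<bar>integral {pi / (real j + 1)..pi / real j} (\<lambda>t. psi f x t * D t)\<bar>)"
      by (simp add: sum_abs)
    also have "\<dots> \<le> (\<Sum>j=1..n. excess_bound n j * (psi_mass f x (pi / real j) - psi_mass f x (pi / (real j + 1))))"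
      unfolding D_def by (intro sum_mono piece_bound) auto
    also have "\<dots> \<le> (2 * pi / (real n + 1)) * S"
      unfolding S_def by (rule pieces_sum_bound)
    finally show ?thesis .
  qed
  have "\<bar>T_conj cesaro b f n x - conj_trunc f x e\<bar> = (1/pi) * \<bar>A + B\<bar>"
    unfolding TT by (simp add: abs_mult)
  also have "\<dots> \<le> (1/pi) * (pi * w_conj f x e + (2 * pi / (real n + 1)) * S)"
    using A_bound B_bound abs_triangle_ineq[of A B] by (intro mult_left_mono) auto
  also have "\<dots> = w_conj f x e + (2 / (real n + 1)) * S"
  proof -
    define d where "d = real n + 1"
    have "d \<noteq> 0" unfolding d_def by (simp add: add_nonneg_eq_0_iff)
    then show ?thesis unfolding d_def[symmetric] by (simp add: field_simps)
  qed
  finally show ?thesis unfolding e_def S_def .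
qed

lemma truncation_error_le_rhs:
  "\<bar>T_conj cesaro b f n x - conj_trunc f x (pi / (real n + 1))\<bar> \<le> (64 + 8 * C) * rhs_sum f x n"
proof -
  define W where "W k = w_conj f x (pi / (real k + 1))" for k
  define S1 where "S1 = (\<Sum>k=0..n. W k)"
  define S2 where "S2 = (\<Sum>k=0..n. W k * harmonic_tail n k)"
  have Wnn: "\<And>k. 0 \<le> W k" unfolding W_def by (rule w_conj_nonneg[OF L1])
  have Wmon: "\<And>k j. k \<le> j \<Longrightarrow> W j * (real k + 1) \<le> W k * (real j + 1)"
    unfolding W_def by (rule w_conj_quasi_mono[OF L1])
  have last: "W n \<le> (2 / (real n + 1)) * S1"
    unfolding S1_def by (rule last_le_average[OF Wnn Wmon])
  have sums: "S1 \<le> 8 * S2"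
    unfolding S1_def S2_def by (rule sum_le_harmonic_weighted[OF Wnn Wmon])
  have "(\<Sum>k=0..n. (3 + 4 * C * harmonic_tail n k) * W k) = 3 * S1 + 4 * C * S2"
    unfolding S1_def S2_def by (simp add: algebra_simps sum.distrib sum_distrib_left)
  then have "\<bar>T_conj cesaro b f n x - conj_trunc f x (pi / (real n + 1))\<bar>
      \<le> W n + (2 / (real n + 1)) * (3 * S1 + 4 * C * S2)"
    using truncation_error_bound[of n x] unfolding W_def by simp
  also have "\<dots> \<le> (2 / (real n + 1)) * S1 + (2 / (real n + 1)) * (3 * S1 + 4 * C * S2)"
    using last by simp
  also have "\<dots> = (1 / (real n + 1)) * (8 * S1 + 8 * C * S2)"
  proof -
    define d where "d = real n + 1"
    have "d \<noteq> 0" unfolding d_def by (simp add: add_nonneg_eq_0_iff)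
    then show ?thesis unfolding d_def[symmetric] by (simp add: field_simps)
  qed
  also have "\<dots> \<le> (1 / (real n + 1)) * (64 * S2 + 8 * C * S2)"
    using sums by (intro mult_left_mono) auto
  also have "\<dots> = (64 + 8 * C) * rhs_sum f x n"
    unfolding rhs_sum_harmonic S2_def W_def by (simp add: algebra_simps add_divide_distrib)
  finally show ?thesis .
qed

end

section \<open>From the truncated to the full conjugate function\<close>

text \<open>If f~(x) exists, it differs from f~(x, e) by at most (1/pi) \<integral>_0^e |psi_x(t)|/t dt,
  because cot(t/2)/2 \<le> 1/t.\<close>
lemma conj_fun_minus_trunc:
  assumes L: "L1_periodic f" and ex: "conj_exists f x" and e: "0 < e" "e \<le> pi"
    and int: "(\<lambda>t. \<bar>psi f x t\<bar> / t) integrable_on {0..e}"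
  shows "\<bar>conj_fun f x - conj_trunc f x e\<bar> \<le> (1/pi) * integral {0..e} (\<lambda>t. \<bar>psi f x t\<bar> / t)"
proof -
  define M where "M = (1/pi) * integral {0..e} (\<lambda>t. \<bar>psi f x t\<bar> / t)"
  obtain l where l: "((\<lambda>\<epsilon>. conj_trunc f x \<epsilon>) \<longlongrightarrow> l) (at_right 0)"
    using ex unfolding conj_exists_def by blast
  have fl: "conj_fun f x = l" unfolding conj_fun_def by (rule tendsto_Lim) (simp_all add: l)
  have bd: "\<bar>conj_trunc f x \<delta> - conj_trunc f x e\<bar> \<le> M" if d: "0 < \<delta>" "\<delta> < e" for \<delta>
  proof -
    let ?g = "\<lambda>t. psi f x t * (cot (t/2) / 2)"
    have iC: "?g integrable_on {a..pi}" if "0 < a" for a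
      using that by (intro psi_times_continuous_integrable L continuous_on_divide
          half_cot_continuous continuous_on_const) auto
    have "integral {\<delta>..pi} ?g = integral {\<delta>..e} ?g + integral {e..pi} ?g"
      using d e by (intro Henstock_Kurzweil_Integration.integral_combine[symmetric] iC) auto
    moreover have "conj_trunc f x \<delta> - conj_trunc f x e
        = -(1/pi) * integral {\<delta>..pi} ?g - (-(1/pi) * integral {e..pi} ?g)"
      unfolding conj_trunc_def ..
    ultimately have eq: "conj_trunc f x \<delta> - conj_trunc f x e = -(1/pi) * integral {\<delta>..e} ?g"
      by (simp only:) (simp only: algebra_simps)
    have i1: "?g integrable_on {\<delta>..e}"
      by (rule integrable_subinterval_real[OF iC[OF d(1)]]) (use e in auto)
    have i2: "(\<lambda>t. \<bar>psi f x t\<bar> / t) integrable_on {\<delta>..e}"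
      by (rule integrable_subinterval_real[OF int]) (use d in auto)
    have "norm (integral {\<delta>..e} ?g) \<le> integral {\<delta>..e} (\<lambda>t. \<bar>psi f x t\<bar> / t)"
    proof (rule integral_norm_bound_integral[OF i1 i2])
      fix t assume "t \<in> {\<delta>..e}"
      then have "0 < t" "t \<le> pi" using d e by auto
      from half_cot_bounds[OF this]
      show "norm (?g t) \<le> \<bar>psi f x t\<bar> / t"
        by (simp add: abs_mult) (metis abs_ge_zero mult_left_mono mult_1_right times_divide_eq_right)
    qed
    also have "\<dots> \<le> integral {0..e} (\<lambda>t. \<bar>psi f x t\<bar> / t)"
      by (rule integral_subset_le[OF _ i2 int]) (use d in auto)
    finally have "\<bar>integral {\<delta>..e} ?g\<bar> \<le> integral {0..e} (\<lambda>t. \<bar>psi f x t\<bar> / t)"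
      by (simp only: real_norm_def)
    then have "(1/pi) * \<bar>integral {\<delta>..e} ?g\<bar> \<le> M" unfolding M_def by (rule mult_left_mono) simp
    moreover have "\<bar>-(1/pi) * integral {\<delta>..e} ?g\<bar> = (1/pi) * \<bar>integral {\<delta>..e} ?g\<bar>"
      by (simp add: abs_mult)
    ultimately show ?thesis unfolding eq by simp
  qed
  have "eventually (\<lambda>\<delta>. \<bar>conj_trunc f x \<delta> - conj_trunc f x e\<bar> \<le> M) (at_right 0)"
    unfolding eventually_at_right_field using e bd by blast
  moreover have "((\<lambda>\<delta>. \<bar>conj_trunc f x \<delta> - conj_trunc f x e\<bar>) \<longlongrightarrow> \<bar>l - conj_trunc f x e\<bar>) (at_right 0)"
    by (intro tendsto_intros l)
  ultimately have "\<bar>l - conj_trunc f x e\<bar> \<le> M"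
    using tendsto_upperbound by (metis trivial_limit_at_right_real)
  then show ?thesis unfolding fl M_def .
qed

theorem theorem2:
  fixes f :: "real \<Rightarrow> real" and b :: "nat \<Rightarrow> nat \<Rightarrow> real"
  assumes "L1_periodic f"
    and "lt_stoch b"
    and "\<exists>C>0. \<forall>r l. l \<le> r \<longrightarrow>
           \<bar>b r (r - l) - b (r + 1) (r + 1 - l)\<bar> \<le> C / (real r + 1) ^ 2"
  shows "(\<forall>x. \<exists>K>0. \<forall>n.
            \<bar>T_conj cesaro b f n x - conj_trunc f x (pi / (real n + 1))\<bar> \<le> K * rhs_sum f x n)
       \<and> (\<forall>x. conj_exists f x
              \<and> (\<exists>K'>0. \<forall>n. (\<lambda>t. \<bar>psi f x t\<bar> / t) integrable_on {0..pi / (real n + 1)}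
                   \<and> (1 / pi) * integral {0..pi / (real n + 1)} (\<lambda>t. \<bar>psi f x t\<bar> / t)
                       \<le> K' * w_conj f x (pi / (real n + 1)))
            \<longrightarrow> (\<exists>K>0. \<forall>n. \<bar>T_conj cesaro b f n x - conj_fun f x\<bar> \<le> K * rhs_sum f x n))"
proof -
  obtain C where "C > 0"
    and var: "\<forall>r l. l \<le> r \<longrightarrow> \<bar>b r (r - l) - b (r + 1) (r + 1 - l)\<bar> \<le> C / (real r + 1) ^ 2"
    using assms(3) by blast
  interpret conj_setting b C f
    using assms(1,2) var by unfold_locales
  have K0: "0 < 64 + 8 * C" using \<open>C > 0\<close> by simp
  show ?thesis
  proof (intro conjI allI impI)
    show "\<exists>K>0. \<forall>n. \<bar>T_conj cesaro b f n x - conj_trunc f x (pi / (real n + 1))\<bar> \<le> K * rhs_sum f x n" for x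
      using truncation_error_le_rhs K0 by blast
  next
    fix x
    assume hyp: "conj_exists f x \<and> (\<exists>K'>0. \<forall>n. (\<lambda>t. \<bar>psi f x t\<bar> / t) integrable_on {0..pi / (real n + 1)}
                   \<and> (1 / pi) * integral {0..pi / (real n + 1)} (\<lambda>t. \<bar>psi f x t\<bar> / t)
                       \<le> K' * w_conj f x (pi / (real n + 1)))"
    then obtain K' where "K' > 0" and K': "\<And>n. (\<lambda>t. \<bar>psi f x t\<bar> / t) integrable_on {0..pi / (real n + 1)}
                   \<and> (1 / pi) * integral {0..pi / (real n + 1)} (\<lambda>t. \<bar>psi f x t\<bar> / t)
                       \<le> K' * w_conj f x (pi / (real n + 1))" by blast
    have "\<bar>T_conj cesaro b f n x - conj_fun f x\<bar> \<le> (64 + 8 * C + 16 * K') * rhs_sum f x n" for n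
    proof -
      have "\<bar>conj_fun f x - conj_trunc f x (pi / (real n + 1))\<bar>
          \<le> (1/pi) * integral {0..pi / (real n + 1)} (\<lambda>t. \<bar>psi f x t\<bar> / t)"
        using hyp K'[of n] by (intro conj_fun_minus_trunc[OF assms(1)]) (auto simp: field_simps)
      also have "\<dots> \<le> K' * w_conj f x (pi / (real n + 1))" using K'[of n] by blast
      also have "\<dots> \<le> K' * (16 * rhs_sum f x n)"
        using \<open>K' > 0\<close> w_conj_le_rhs_sum[OF assms(1)] by (intro mult_left_mono) auto
      finally show ?thesis using truncation_error_le_rhs[of n x] by (simp add: algebra_simps)
    qed
    moreover have "0 < 64 + 8 * C + 16 * K'" using \<open>C > 0\<close> \<open>K' > 0\<close> by simp
    ultimately show "\<exists>K>0. \<forall>n. \<bar>T_conj cesaro b f n x - conj_fun f x\<bar> \<le> K * rhs_sum f x n" by blast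
  qed
qed

end
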